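(* Let $1\le n\le L$. If $p_i=p$ and $q_i=q$ for all $i$, then $$Z_{L,n}=\binom{L-1}{n-1}\,[n]_{p,q}^{\,L-n},\qquad\text{where } [n]_{p,q}=p^{n-1}+p^{n-2}q+\cdots+pq^{n-2}+q^{n-1}.$$
   Context: Particle labels are taken modulo $n$. $\Omega_{L,n}$ is the set of words $w_1\cdots w_L$ on the ring $\mathbb{Z}/L\mathbb{Z}$ over the alphabet $\{\bullet_1,\dots,\bullet_n,\Box_1,\dots,\Box_n\}$ in which each $\bullet_k$ occurs exactly once, the $\bullet_1,\dots,\bullet_n$ appear in this cyclic order, and the remaining $L-n$ letters are arbitrary $\Box_i$'s. For $w\in\Omega_{L,n}$ let $b_k$ be the position of $\bullet_k$ and $C_k$ the set of positions strictly between $b_k$ and $b_{k+1}$ going cyclically forward ($b_{n+1}=b_1$). For $i,k\in\{1,\dots,n\}$ set $w_\Box(i,k)=p_1\cdots p_{i-1}q_{i+1}\cdots q_kp_{k+1}\cdots p_n$ if $i\le k$ and $w_\Box(i,k)=q_1\cdots q_kp_{k+1}\cdots p_{i-1}q_{i+1}\cdots q_n$ if $k<i$ (empty products are $1$). The weight is $\mathrm{wt}(w)=\prod_{k=1}^n\prod_{j\in C_k}w_\Box(i_j,k)$ where $w_j=\Box_{i_j}$. The restricted partition function is $Z_{L,n}=\sum\mathrm{wt}(w)$, the sum over $w\in\Omega_{L,n}$ with $w_1=\bullet_1$; it is a polynomial in $p_1,\dots,p_n,q_1,\dots,q_n$, and the claim is about its specialization. *)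

theory Defs
  imports Main
begin

text \<open>Letters of a word: Bul k is the particle (bullet) with label k,
  Box i is the empty site (box) with label i. Positions of a word of
  length L are 0..L-1 (position 0 corresponds to w_1), read cyclically.\<close>

datatype letter = Bul nat | Box nat

definition fdist :: "nat \<Rightarrow> nat \<Rightarrow> nat \<Rightarrow> nat" where
  "fdist L a b = (b + L - a) mod L"

definition bpos :: "letter list \<Rightarrow> nat \<Rightarrow> nat" where
  "bpos w k = (THE j. j < length w \<and> w ! j = Bul k)"

definition nextlab :: "nat \<Rightarrow> nat \<Rightarrow> nat" where
  "nextlab n k = (if k = n then 1 else k + 1)"

definition Omega :: "nat \<Rightarrow> nat \<Rightarrow> letter list set" where
  "Omega L n = {w. length w = L
     \<and> (\<forall>j<L. case w ! j of Bul k \<Rightarrow> k \<in> {1..n} | Box i \<Rightarrow> i \<in> {1..n})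
     \<and> (\<forall>k\<in>{1..n}. card {j. j < L \<and> w ! j = Bul k} = 1)
     \<and> (\<forall>k\<in>{1..<n}. fdist L (bpos w 1) (bpos w k) < fdist L (bpos w 1) (bpos w (k+1)))}"

text \<open>C_k: positions strictly between b_k and b_{k+1} going cyclically forward
  (b_{n+1} = b_1; when b_{k+1} = b_k, i.e. n = 1, this is all other positions).\<close>
definition Cset :: "nat \<Rightarrow> letter list \<Rightarrow> nat \<Rightarrow> nat set" where
  "Cset n w k = (let L = length w; a = bpos w k; b = bpos w (nextlab n k);
                     s = (if a = b then L else fdist L a b)
                 in {j. j < L \<and> 0 < fdist L a j \<and> fdist L a j < s})"

definition wbox :: "nat \<Rightarrow> (nat \<Rightarrow> 'a::comm_ring_1) \<Rightarrow> (nat \<Rightarrow> 'a) \<Rightarrow> nat \<Rightarrow> nat \<Rightarrow> 'a" where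
  "wbox n p q i k = (if i \<le> k
     then (\<Prod>m\<in>{1..<i}. p m) * (\<Prod>m\<in>{i<..k}. q m) * (\<Prod>m\<in>{k<..n}. p m)
     else (\<Prod>m\<in>{1..k}. q m) * (\<Prod>m\<in>{k<..<i}. p m) * (\<Prod>m\<in>{i<..n}. q m))"

definition wt :: "nat \<Rightarrow> (nat \<Rightarrow> 'a::comm_ring_1) \<Rightarrow> (nat \<Rightarrow> 'a) \<Rightarrow> letter list \<Rightarrow> 'a" where
  "wt n p q w = (\<Prod>k\<in>{1..n}. \<Prod>j\<in>Cset n w k.
      (case w ! j of Box i \<Rightarrow> wbox n p q i k | Bul _ \<Rightarrow> 1))"

definition Zpart :: "nat \<Rightarrow> nat \<Rightarrow> (nat \<Rightarrow> 'a::comm_ring_1) \<Rightarrow> (nat \<Rightarrow> 'a) \<Rightarrow> 'a" where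
  "Zpart L n p q = (\<Sum>w\<in>{w\<in>Omega L n. w ! 0 = Bul 1}. wt n p q w)"

definition qint :: "nat \<Rightarrow> 'a::comm_ring_1 \<Rightarrow> 'a \<Rightarrow> 'a" where
  "qint n p q = (\<Sum>j<n. p ^ (n - 1 - j) * q ^ j)"

end

theory Submission
  imports Defs
begin

text \<open>
  Since w_1 is the bullet 1, the cyclic order of the bullets is their order from left to right:
  a word of Omega_{L,n} starting with bullet 1 is that bullet followed by a word in which the
  bullets 2, ..., n occur in this order, and a box lies in C_k exactly when k bullets precede it.
  So the weight is the product, over all boxes, of w_Box(i, number of preceding bullets).
  Reading the word from the left, each further letter is either the next bullet or one of the
  n boxes, and for constant p_i = p, q_i = q the box weights w_Box(i, k) = p^(n-1-d) q^d, with d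
  the cyclic distance from i to k, sum to [n]_{p,q} over i. Hence the partial sums satisfy
  Pascal's recurrence, which gives Z_{L,n} = binom(L-1, n-1) [n]_{p,q}^(L-n).
\<close>

lemma strict_mono_on_atLeastAtMostI:
  fixes f :: "nat \<Rightarrow> 'a::order"
  assumes step: "\<And>k. a \<le> k \<Longrightarrow> k < b \<Longrightarrow> f k < f (Suc k)"
  shows "strict_mono_on {a..b} f"
proof (rule strict_mono_onI)
  fix r s assume r: "r \<in> {a..b}" and "s \<in> {a..b}" "r < s"
  then have "s \<le> b" "Suc r \<le> s" by auto
  from this(2) show "f r < f s"
  proof (induction rule: dec_induct)
    case base
    show ?case using r \<open>r < s\<close> \<open>s \<le> b\<close> step by simp
  next
    case (step m)
    then have "f r < f m" using r by simp
    also have "f m < f (Suc m)" using step.hyps r \<open>s \<le> b\<close> assms[of m] by simp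
    finally show ?case .
  qed
qed

lemma card_less_image_strict_mono_on:
  fixes f :: "'a::linorder \<Rightarrow> 'b::linorder"
  assumes "strict_mono_on S f" "k \<in> S"
  shows "card {x \<in> f ` S. x < f k} = card {i \<in> S. i < k}"
proof -
  have "{x \<in> f ` S. x < f k} = f ` {i \<in> S. i < k}"
    using strict_mono_on_less[OF assms(1) _ assms(2)] by auto
  moreover have "inj_on f {i \<in> S. i < k}"
    using strict_mono_on_imp_inj_on[OF assms(1)] by (rule inj_on_subset) auto
  ultimately show ?thesis by (simp add: card_image)
qed

lemma fdist_eq:
  assumes "j < L"
  shows "fdist L a j = (if a \<le> j then j - a else j + L - a)"
proof (cases "a \<le> j")
  case True
  then have "j + L - a = (j - a) + L" by simp
  then have "fdist L a j = (j - a) mod L" unfolding fdist_def by (simp only: mod_add_self2)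
  then show ?thesis using True assms by simp
next
  case False
  then have "j + L - a < L" using assms by simp
  then show ?thesis using False by (simp add: fdist_def)
qed

lemma fdist_0: "j < L \<Longrightarrow> fdist L 0 j = j"
  by (simp add: fdist_eq)

lemma fdist_window:
  assumes "a < b" "b \<le> L"
  shows "{j. j < L \<and> 0 < fdist L a j \<and> fdist L a j < b - a} = {a<..<b}"
  using assms by (auto simp: fdist_eq split: if_split_asm)

lemma fdist_labels:
  assumes "i \<in> {1..n}" "k \<in> {1..n}"
  shows "fdist n i k = (if i \<le> k then k - i else k + n - i)"
proof (cases "i \<le> k")
  case True
  then have "k + n - i = (k - i) + n" by simp
  then have "fdist n i k = (k - i) mod n" unfolding fdist_def by (simp only: mod_add_self2)
  then show ?thesis using True assms by simp
qed (use assms in \<open>simp add: fdist_def\<close>)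

fun is_Bul :: "letter \<Rightarrow> bool" where
  "is_Bul (Bul _) = True"
| "is_Bul (Box _) = False"

definition bullets_before :: "letter list \<Rightarrow> nat \<Rightarrow> nat" where
  "bullets_before w j = length (filter is_Bul (take j w))"

lemma bullets_before_0 [simp]: "bullets_before w 0 = 0"
  by (simp add: bullets_before_def)

lemma bullets_before_Suc:
  "j < length w \<Longrightarrow> bullets_before w (Suc j) = bullets_before w j + (if is_Bul (w ! j) then 1 else 0)"
  by (simp add: bullets_before_def take_Suc_conv_app_nth)

lemma bullets_before_Cons_Suc [simp]:
  "bullets_before (x # u) (Suc j) = (if is_Bul x then 1 else 0) + bullets_before u j"
  by (simp add: bullets_before_def)

lemma bullets_before_mono: "i \<le> j \<Longrightarrow> bullets_before w i \<le> bullets_before w j"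
proof -
  assume "i \<le> j"
  then have "take j w = take i w @ take (j - i) (drop i w)"
    using take_add[of i "j - i" w] by simp
  then show ?thesis by (simp add: bullets_before_def)
qed

lemma bullets_before_less_imp_less: "bullets_before w i < bullets_before w j \<Longrightarrow> i < j"
  using bullets_before_mono[of j i w] by linarith

lemma bullets_before_eq_card:
  "bullets_before w j = card {i. i < j \<and> i < length w \<and> is_Bul (w ! i)}"
  unfolding bullets_before_def length_filter_conv_card by (rule arg_cong[where f = card]) auto

fun ordered_tail :: "nat \<Rightarrow> nat \<Rightarrow> letter list \<Rightarrow> bool" where
  "ordered_tail n k [] \<longleftrightarrow> k = n"
| "ordered_tail n k (Box i # u) \<longleftrightarrow> i \<in> {1..n} \<and> ordered_tail n k u"
| "ordered_tail n k (Bul j # u) \<longleftrightarrow> j = Suc k \<and> ordered_tail n (Suc k) u"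

lemma ordered_tail_le: "ordered_tail n k u \<Longrightarrow> k \<le> n"
  by (induction n k u rule: ordered_tail.induct) auto

lemma ordered_tail_iff:
  "ordered_tail n k u \<longleftrightarrow>
     (\<forall>j<length u. case u ! j of Bul l \<Rightarrow> l = k + bullets_before u j + 1 | Box i \<Rightarrow> i \<in> {1..n})
     \<and> k + bullets_before u (length u) = n"
proof (induction u arbitrary: k)
  case Nil
  then show ?case by simp
next
  case (Cons x u)
  then show ?case
    by (cases x) (auto simp: All_less_Suc2 cong: letter.case_cong)
qed

lemma ordered_tail_Bul_in_set: "ordered_tail n k u \<Longrightarrow> l \<in> {Suc k..n} \<Longrightarrow> Bul l \<in> set u"
  by (induction n k u rule: ordered_tail.induct) (auto simp: Suc_le_eq intro: Suc_lessI)

fun box_weight :: "(nat \<Rightarrow> nat \<Rightarrow> 'a::comm_monoid_mult) \<Rightarrow> nat \<Rightarrow> letter list \<Rightarrow> 'a" where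
  "box_weight g k [] = 1"
| "box_weight g k (Box i # u) = g i k * box_weight g k u"
| "box_weight g k (Bul _ # u) = box_weight g (Suc k) u"

lemma box_weight_eq_prod:
  "box_weight g k u = (\<Prod>j<length u. case u ! j of Box i \<Rightarrow> g i (k + bullets_before u j) | Bul _ \<Rightarrow> 1)"
proof (induction g k u rule: box_weight.induct)
  case (2 g k i u)
  then show ?case unfolding length_Cons prod.lessThan_Suc_shift by (simp cong: letter.case_cong)
next
  case (3 g k l u)
  then show ?case unfolding length_Cons prod.lessThan_Suc_shift by (simp cong: letter.case_cong)
qed simp

locale ordered_word =
  fixes n :: nat and w :: "letter list"
  assumes ordered: "ordered_tail n 0 w"
begin

lemma Bul_label:
  assumes "j < length w" "w ! j = Bul k"
  shows "bullets_before w j = k - 1" "k \<in> {1..n}"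
proof -
  have k: "k = bullets_before w j + 1"
    using ordered assms unfolding ordered_tail_iff by (metis add_0 letter.simps(5))
  then show "bullets_before w j = k - 1" by simp
  have "bullets_before w (Suc j) \<le> bullets_before w (length w)"
    using assms(1) by (intro bullets_before_mono) simp
  then show "k \<in> {1..n}"
    using ordered assms k unfolding ordered_tail_iff by (simp add: bullets_before_Suc)
qed

lemma Box_label: "j < length w \<Longrightarrow> w ! j = Box i \<Longrightarrow> i \<in> {1..n}"
  using ordered unfolding ordered_tail_iff by (metis letter.simps(6))

lemma bullets_total: "bullets_before w (length w) = n"
  using ordered unfolding ordered_tail_iff by simp

lemma ex1_Bul:
  assumes k: "k \<in> {1..n}"
  shows "\<exists>!j. j < length w \<and> w ! j = Bul k"
proof -
  have unique: "i = j" if "i < length w" "w ! i = Bul k" "j < length w" "w ! j = Bul k" for i j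
  proof (rule ccontr)
    assume "i \<noteq> j"
    then have "Suc i \<le> j \<or> Suc j \<le> i" by auto
    then show False
      using Bul_label(1)[OF that(1,2)] Bul_label(1)[OF that(3,4)] k
        bullets_before_mono[of "Suc i" j w] bullets_before_mono[of "Suc j" i w]
      by (auto simp: bullets_before_Suc that)
  qed
  have "Bul k \<in> set w" using ordered_tail_Bul_in_set[OF ordered] k by simp
  then obtain j where "j < length w" "w ! j = Bul k" by (auto simp: in_set_conv_nth)
  then show ?thesis using unique by blast
qed

lemma bpos_Bul:
  assumes "k \<in> {1..n}"
  shows "bpos w k < length w" "w ! bpos w k = Bul k"
  using theI'[OF ex1_Bul[OF assms]] unfolding bpos_def by auto

lemma bpos_eqI:
  assumes "j < length w" "w ! j = Bul k"
  shows "bpos w k = j"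
  unfolding bpos_def using ex1_Bul[OF Bul_label(2)[OF assms]] by (rule the1_equality) (simp add: assms)

lemma bullets_before_bpos: "k \<in> {1..n} \<Longrightarrow> bullets_before w (bpos w k) = k - 1"
  using Bul_label(1) bpos_Bul by blast

lemma bullets_before_Suc_bpos: "k \<in> {1..n} \<Longrightarrow> bullets_before w (Suc (bpos w k)) = k"
  using bullets_before_bpos bpos_Bul by (simp add: bullets_before_Suc)

lemma strict_mono_bpos: "strict_mono_on {1..n} (bpos w)"
proof (rule strict_mono_onI)
  fix a b assume "a \<in> {1..n}" "b \<in> {1..n}" "a < b"
  then have "bullets_before w (bpos w a) < bullets_before w (bpos w b)"
    by (simp add: bullets_before_bpos)
  then show "bpos w a < bpos w b" by (rule bullets_before_less_imp_less)
qed

lemma between_bullets: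
  assumes k: "k \<in> {1..n}"
  defines "E \<equiv> if k < n then bpos w (Suc k) else length w"
  shows "{bpos w k<..<E} = {j. j < length w \<and> \<not> is_Bul (w ! j) \<and> bullets_before w j = k}"
proof (intro set_eqI iffI)
  have EL: "E \<le> length w" using bpos_Bul(1)[of "Suc k"] by (simp add: E_def less_imp_le)
  have bbE: "bullets_before w E = k"
    using bullets_before_bpos[of "Suc k"] bullets_total k by (simp add: E_def)
  fix j
  assume "j \<in> {bpos w k<..<E}"
  then have j: "bpos w k < j" "j < E" by auto
  have "k \<le> bullets_before w j"
    using bullets_before_mono[of "Suc (bpos w k)" j w] bullets_before_Suc_bpos[OF k] j(1) by simp
  moreover have "bullets_before w j \<le> k"
    using bullets_before_mono[of j E w] bbE j(2) by simp
  ultimately have bbj: "bullets_before w j = k" by simp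
  have not_Bul: "\<not> is_Bul (w ! j)"
  proof
    assume "is_Bul (w ! j)"
    then obtain l where l: "w ! j = Bul l" by (cases "w ! j") auto
    with Bul_label[OF _ l] j EL bbj have "l = Suc k" "Suc k \<in> {1..n}" by auto
    with bpos_eqI[OF _ l] j EL show False by (simp add: E_def)
  qed
  show "j \<in> {j. j < length w \<and> \<not> is_Bul (w ! j) \<and> bullets_before w j = k}"
    using j EL bbj not_Bul by simp
next
  fix j
  assume "j \<in> {j. j < length w \<and> \<not> is_Bul (w ! j) \<and> bullets_before w j = k}"
  then have j: "j < length w" "\<not> is_Bul (w ! j)" "bullets_before w j = k" by auto
  have "bullets_before w (bpos w k) < bullets_before w j"
    using bullets_before_bpos[OF k] j(3) k by simp
  then have "bpos w k < j" by (rule bullets_before_less_imp_less)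
  moreover have "j < E"
  proof (cases "k < n")
    case True
    then have k': "Suc k \<in> {1..n}" by simp
    have "bullets_before w j < bullets_before w (Suc (bpos w (Suc k)))"
      using bullets_before_Suc_bpos[OF k'] j(3) by simp
    then have "j < Suc (bpos w (Suc k))" by (rule bullets_before_less_imp_less)
    moreover have "j \<noteq> bpos w (Suc k)" using bpos_Bul(2)[OF k'] j(2) by auto
    ultimately show ?thesis using True by (simp add: E_def)
  qed (simp add: E_def j(1))
  ultimately show "j \<in> {bpos w k<..<E}" by simp
qed

lemma bullets_before_Box:
  assumes "w ! 0 = Bul 1" "j < length w" "\<not> is_Bul (w ! j)"
  shows "bullets_before w j \<in> {1..n}"
proof -
  have "0 < j" using assms(1,3) by (cases j) auto
  then have "bullets_before w 1 \<le> bullets_before w j" by (intro bullets_before_mono) simp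
  moreover have "bullets_before w 1 = 1"
    using assms(1,2) bullets_before_Suc[of 0 w] by (cases w) auto
  moreover have "bullets_before w j \<le> n"
    using bullets_before_mono[of j "length w" w] assms(2) bullets_total by simp
  ultimately show ?thesis by simp
qed

lemma Cset_eq:
  assumes "0 < length w" "w ! 0 = Bul 1" and k: "k \<in> {1..n}"
  shows "Cset n w k = {j. j < length w \<and> \<not> is_Bul (w ! j) \<and> bullets_before w j = k}"
proof -
  define E where "E = (if k < n then bpos w (Suc k) else length w)"
  let ?a = "bpos w k" and ?b = "bpos w (nextlab n k)"
  have "bpos w 1 = 0" using assms by (intro bpos_eqI) auto
  \<comment> \<open>for k = n the window closes at bullet 1, i.e. at the end of the word\<close>
  have "?a < E \<and> E \<le> length w \<and> (if ?a = ?b then length w else fdist (length w) ?a ?b) = E - ?a"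
  proof (cases "k < n")
    case True
    then have "?a < bpos w (Suc k)" "bpos w (Suc k) < length w"
      using strict_mono_onD[OF strict_mono_bpos, of k "Suc k"] bpos_Bul(1)[of "Suc k"] k by auto
    then show ?thesis using True bpos_Bul(1)[OF k] by (simp add: E_def nextlab_def fdist_eq)
  next
    case False
    then show ?thesis
      using assms k bpos_Bul(1)[OF k] \<open>bpos w 1 = 0\<close> by (simp add: E_def nextlab_def fdist_eq)
  qed
  then have "Cset n w k = {?a<..<E}"
    unfolding Cset_def Let_def by (simp add: fdist_window)
  then show ?thesis using between_bullets[OF k] by (simp add: E_def)
qed

lemma wt_eq_box_weight:
  assumes "0 < length w" "w ! 0 = Bul 1"
  shows "wt n p q w = box_weight (wbox n p q) 0 w"
proof -
  define Boxes where "Boxes = {j. j < length w \<and> \<not> is_Bul (w ! j)}"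
  define G where "G j = (case w ! j of Box i \<Rightarrow> wbox n p q i (bullets_before w j) | Bul _ \<Rightarrow> 1)"
    for j
  have "wt n p q w = (\<Prod>k\<in>{1..n}. \<Prod>j\<in>{j \<in> Boxes. bullets_before w j = k}. G j)"
    unfolding wt_def
    by (intro prod.cong) (auto simp: Cset_eq[OF assms] Boxes_def G_def split: letter.split)
  also have "\<dots> = (\<Prod>j\<in>Boxes. G j)"
  proof (rule prod.group)
    show "bullets_before w ` Boxes \<subseteq> {1..n}"
      unfolding Boxes_def by (blast intro: bullets_before_Box[OF assms(2)])
  qed (simp_all add: Boxes_def)
  also have "\<dots> = (\<Prod>j<length w. G j)"
    by (rule prod.mono_neutral_left) (auto simp: Boxes_def G_def split: letter.split)
  finally show ?thesis
    unfolding G_def box_weight_eq_prod by (simp cong: letter.case_cong)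
qed

lemma ordered_imp_Omega:
  assumes "0 < length w" "w ! 0 = Bul 1"
  shows "w \<in> Omega (length w) n"
  unfolding Omega_def
proof (intro CollectI conjI allI impI ballI refl)
  fix j assume "j < length w"
  then show "case w ! j of Bul k \<Rightarrow> k \<in> {1..n} | Box i \<Rightarrow> i \<in> {1..n}"
    using Bul_label(2) Box_label by (cases "w ! j") auto
next
  fix k assume k: "k \<in> {1..n}"
  have "{j. j < length w \<and> w ! j = Bul k} = {bpos w k}"
    using bpos_Bul[OF k] bpos_eqI by blast
  then show "card {j. j < length w \<and> w ! j = Bul k} = 1" by simp
next
  fix k assume "k \<in> {1..<n}"
  moreover have "bpos w 1 = 0" using assms by (intro bpos_eqI) auto
  ultimately show "fdist (length w) (bpos w 1) (bpos w k) < fdist (length w) (bpos w 1) (bpos w (k + 1))"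
    using strict_mono_onD[OF strict_mono_bpos, of k "Suc k"] bpos_Bul(1)[of k] bpos_Bul(1)[of "Suc k"]
    by (simp add: fdist_0)
qed

end

lemma Omega_bpos:
  assumes om: "w \<in> Omega L n" and "1 \<le> n" "w ! 0 = Bul 1"
  shows "k \<in> {1..n} \<Longrightarrow> bpos w k < L"
    and "j < L \<Longrightarrow> w ! j = Bul l \<longleftrightarrow> l \<in> {1..n} \<and> j = bpos w l"
    and "strict_mono_on {1..n} (bpos w)"
proof -
  have len: "length w = L"
    and label: "\<And>j. j < L \<Longrightarrow> case w ! j of Bul k \<Rightarrow> k \<in> {1..n} | Box i \<Rightarrow> i \<in> {1..n}"
    and card1: "\<And>k. k \<in> {1..n} \<Longrightarrow> card {j. j < L \<and> w ! j = Bul k} = 1"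
    and chain: "\<And>k. k \<in> {1..<n} \<Longrightarrow> fdist L (bpos w 1) (bpos w k) < fdist L (bpos w 1) (bpos w (k + 1))"
    using om unfolding Omega_def by simp_all
  have ex1: "\<exists>!j. j < L \<and> w ! j = Bul k" if k: "k \<in> {1..n}" for k
  proof -
    obtain x where "{j. j < L \<and> w ! j = Bul k} = {x}"
      using card1[OF k] by (rule card_1_singletonE)
    then have "j < L \<and> w ! j = Bul k \<longleftrightarrow> j = x" for j by (simp add: set_eq_iff)
    then show ?thesis by (intro ex1I[of _ x]) simp_all
  qed
  have bpos: "bpos w k < L" "w ! bpos w k = Bul k" if "k \<in> {1..n}" for k
    using theI'[OF ex1[OF that]] unfolding bpos_def len by auto
  then show "k \<in> {1..n} \<Longrightarrow> bpos w k < L" by blast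
  have Bul_iff: "w ! j = Bul l \<longleftrightarrow> l \<in> {1..n} \<and> j = bpos w l" if "j < L" for j l
  proof
    assume Bul: "w ! j = Bul l"
    then have l: "l \<in> {1..n}" using label[OF that] by simp
    then show "l \<in> {1..n} \<and> j = bpos w l" using ex1[OF l] bpos[OF l] that Bul by blast
  qed (use bpos in blast)
  then show "j < L \<Longrightarrow> w ! j = Bul l \<longleftrightarrow> l \<in> {1..n} \<and> j = bpos w l" .
  have "0 < L" using bpos(1)[of 1] \<open>1 \<le> n\<close> by simp
  then have "bpos w 1 = 0" using Bul_iff[of 0 1] \<open>w ! 0 = Bul 1\<close> by simp
  show "strict_mono_on {1..n} (bpos w)"
  proof (rule strict_mono_on_atLeastAtMostI)
    fix k assume "1 \<le> k" "k < n"
    then show "bpos w k < bpos w (Suc k)"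
      using chain[of k] bpos(1)[of k] bpos(1)[of "Suc k"] \<open>bpos w 1 = 0\<close> by (simp add: fdist_0)
  qed
qed

lemma Omega_imp_ordered:
  assumes om: "w \<in> Omega L n" and "1 \<le> n" "w ! 0 = Bul 1"
  shows "ordered_tail n 0 w"
proof -
  note bpos_less = Omega_bpos(1)[OF assms] and Bul_iff = Omega_bpos(2)[OF assms]
    and mono = Omega_bpos(3)[OF assms]
  have len: "length w = L"
    and label: "\<And>j. j < L \<Longrightarrow> case w ! j of Bul k \<Rightarrow> k \<in> {1..n} | Box i \<Rightarrow> i \<in> {1..n}"
    using om unfolding Omega_def by simp_all
  have "{i. i < L \<and> is_Bul (w ! i)} = bpos w ` {1..n}"
  proof (intro set_eqI iffI)
    fix i assume "i \<in> {i. i < L \<and> is_Bul (w ! i)}"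
    then obtain l where "i < L" "w ! i = Bul l" by (cases "w ! i") auto
    then show "i \<in> bpos w ` {1..n}" using Bul_iff by blast
  next
    fix i assume "i \<in> bpos w ` {1..n}"
    then obtain l where "l \<in> {1..n}" "i = bpos w l" by blast
    then show "i \<in> {i. i < L \<and> is_Bul (w ! i)}" using bpos_less Bul_iff[of i l] by auto
  qed
  then have bb: "bullets_before w j = card {x \<in> bpos w ` {1..n}. x < j}" for j
    unfolding bullets_before_eq_card len by (metis (mono_tags, lifting) mem_Collect_eq)
  show ?thesis
    unfolding ordered_tail_iff len
  proof (intro conjI allI impI)
    fix j assume j: "j < L"
    show "case w ! j of Bul l \<Rightarrow> l = 0 + bullets_before w j + 1 | Box i \<Rightarrow> i \<in> {1..n}"
    proof (cases "w ! j")
      case (Bul l)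
      then have l: "l \<in> {1..n}" "j = bpos w l" using Bul_iff[OF j] by auto
      have "{i \<in> {1..n}. i < l} = {1..<l}" using l(1) by auto
      then have "bullets_before w j = l - 1"
        using card_less_image_strict_mono_on[OF mono l(1)] l(2) bb by simp
      then show ?thesis using Bul l(1) by simp
    qed (use label[OF j] in simp)
  next
    have "{x \<in> bpos w ` {1..n}. x < L} = bpos w ` {1..n}" using bpos_less by auto
    then show "0 + bullets_before w L = n"
      using bb[of L] card_image[OF strict_mono_on_imp_inj_on[OF mono]] by simp
  qed
qed

definition ordered_tails :: "nat \<Rightarrow> nat \<Rightarrow> nat \<Rightarrow> letter list set" where
  "ordered_tails n k m = {u. length u = m \<and> ordered_tail n k u}"

lemma ordered_tails_0: "ordered_tails n k 0 = (if k = n then {[]} else {})"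
  by (auto simp: ordered_tails_def)

lemma ordered_tails_Suc:
  "ordered_tails n k (Suc m) =
     (\<lambda>(i, u). Box i # u) ` ({1..n} \<times> ordered_tails n k m) \<union> (#) (Bul (Suc k)) ` ordered_tails n (Suc k) m"
proof (intro set_eqI iffI)
  fix u assume "u \<in> ordered_tails n k (Suc m)"
  then obtain x v where "u = x # v" "length v = m" "ordered_tail n k (x # v)"
    by (cases u) (auto simp: ordered_tails_def)
  then show "u \<in> (\<lambda>(i, u). Box i # u) ` ({1..n} \<times> ordered_tails n k m) \<union> (#) (Bul (Suc k)) ` ordered_tails n (Suc k) m"
    by (cases x) (auto simp: ordered_tails_def image_iff)
qed (auto simp: ordered_tails_def)

lemma finite_ordered_tails: "finite (ordered_tails n k m)"
  by (induction m arbitrary: k) (simp_all add: ordered_tails_0 ordered_tails_Suc)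

lemma Omega_first_Bul_eq:
  assumes "1 \<le> n" "0 < L"
  shows "{w \<in> Omega L n. w ! 0 = Bul 1} = (#) (Bul 1) ` ordered_tails n 1 (L - 1)"
proof (intro set_eqI iffI)
  fix w assume w: "w \<in> {w \<in> Omega L n. w ! 0 = Bul 1}"
  then have "ordered_tail n 0 w" "length w = L"
    using Omega_imp_ordered[OF _ assms(1)] by (auto simp: Omega_def)
  moreover obtain u where "w = Bul 1 # u"
    using w \<open>length w = L\<close> assms(2) by (cases w) auto
  ultimately show "w \<in> (#) (Bul 1) ` ordered_tails n 1 (L - 1)"
    by (auto simp: ordered_tails_def)
next
  fix w assume "w \<in> (#) (Bul 1) ` ordered_tails n 1 (L - 1)"
  then obtain u where u: "w = Bul 1 # u" "length u = L - 1" "ordered_tail n 1 u"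
    by (auto simp: ordered_tails_def)
  then interpret ordered_word n w by unfold_locales simp
  show "w \<in> {w \<in> Omega L n. w ! 0 = Bul 1}"
    using ordered_imp_Omega u assms(2) by simp
qed

lemma sum_box_weight_Suc:
  fixes g :: "nat \<Rightarrow> nat \<Rightarrow> 'a::comm_semiring_1"
  shows "(\<Sum>u\<in>ordered_tails n k (Suc m). box_weight g k u) =
    (\<Sum>i\<in>{1..n}. g i k) * (\<Sum>u\<in>ordered_tails n k m. box_weight g k u)
    + (\<Sum>u\<in>ordered_tails n (Suc k) m. box_weight g (Suc k) u)"
proof -
  have "inj_on (\<lambda>(i, u). Box i # u) ({1..n} \<times> ordered_tails n k m)"
    by (auto simp: inj_on_def)
  moreover have "inj_on ((#) (Bul (Suc k))) (ordered_tails n (Suc k) m)"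
    by simp
  ultimately show ?thesis
    unfolding ordered_tails_Suc
    by (subst sum.union_disjoint)
       (auto simp: finite_ordered_tails sum.reindex sum.cartesian_product sum_product case_prod_unfold)
qed

lemma binomial_power_Suc:
  fixes Q :: "'a::comm_semiring_1"
  assumes "0 < r"
  shows "Q * (of_nat (m choose r) * Q ^ (m - r)) + of_nat (m choose (r - 1)) * Q ^ (m - (r - 1))
    = of_nat (Suc m choose r) * Q ^ (Suc m - r)"
proof -
  obtain s where r: "r = Suc s" using assms by (cases r) auto
  have "Q * (of_nat (m choose r) * Q ^ (m - r)) = of_nat (m choose r) * Q ^ (Suc m - r)"
  proof (cases "r \<le> m")
    case True
    then show ?thesis by (simp add: Suc_diff_le ac_simps)
  qed (simp add: binomial_eq_0)
  then show ?thesis by (simp add: r algebra_simps)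
qed

lemma sum_box_weight_ordered_tails:
  fixes g :: "nat \<Rightarrow> nat \<Rightarrow> 'a::comm_semiring_1"
  assumes row_sum: "\<And>k. k \<in> {1..n} \<Longrightarrow> (\<Sum>i\<in>{1..n}. g i k) = Q"
    and k: "k \<in> {1..n}"
  shows "(\<Sum>u\<in>ordered_tails n k m. box_weight g k u) = of_nat (m choose (n - k)) * Q ^ (m - (n - k))"
  using k
proof (induction m arbitrary: k)
  case 0
  then show ?case by (auto simp: ordered_tails_0 binomial_eq_0)
next
  case (Suc m)
  have step: "(\<Sum>u\<in>ordered_tails n k (Suc m). box_weight g k u) =
    Q * (\<Sum>u\<in>ordered_tails n k m. box_weight g k u)
    + (\<Sum>u\<in>ordered_tails n (Suc k) m. box_weight g (Suc k) u)"
    using sum_box_weight_Suc[where g = g and n = n and k = k and m = m] row_sum[OF Suc.prems] by simp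
  show ?case
  proof (cases "k = n")
    case True
    then have "ordered_tails n (Suc k) m = {}"
      using ordered_tail_le by (fastforce simp: ordered_tails_def)
    then show ?thesis
      unfolding step using True Suc.IH[of k] Suc.prems by simp
  next
    case False
    then have "n - Suc k = n - k - 1" "0 < n - k" "Suc k \<in> {1..n}" using Suc.prems by auto
    show ?thesis
      unfolding step Suc.IH[OF Suc.prems] Suc.IH[OF \<open>Suc k \<in> {1..n}\<close>] \<open>n - Suc k = n - k - 1\<close>
      by (rule binomial_power_Suc[OF \<open>0 < n - k\<close>])
  qed
qed

lemma wbox_const:
  fixes p q :: "'a::comm_ring_1"
  assumes "i \<in> {1..n}" "k \<in> {1..n}"
  shows "wbox n (\<lambda>_. p) (\<lambda>_. q) i k = p ^ (n - 1 - fdist n i k) * q ^ fdist n i k"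
proof (cases "i \<le> k")
  case True
  then have "fdist n i k = k - i" "n - 1 - (k - i) = (i - 1) + (n - k)"
    using assms by (simp_all add: fdist_labels)
  then show ?thesis using True by (simp add: wbox_def power_add ac_simps)
next
  case False
  then have "fdist n i k = k + (n - i)" "n - 1 - (k + (n - i)) = i - k - 1"
    using assms by (simp_all add: fdist_labels)
  then show ?thesis using False by (simp add: wbox_def power_add ac_simps)
qed

lemma sum_wbox_const:
  fixes p q :: "'a::comm_ring_1"
  assumes "k \<in> {1..n}"
  shows "(\<Sum>i\<in>{1..n}. wbox n (\<lambda>_. p) (\<lambda>_. q) i k) = qint n p q"
  unfolding qint_def
proof (rule sum.reindex_bij_witness[where j = "\<lambda>i. fdist n i k"
      and i = "\<lambda>d. if d < k then k - d else k + n - d"])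
  fix i assume i: "i \<in> {1..n}"
  have "fdist n i k = (if i \<le> k then k - i else k + n - i)" using fdist_labels[OF i assms] .
  then show "(if fdist n i k < k then k - fdist n i k else k + n - fdist n i k) = i"
    and "fdist n i k \<in> {..<n}"
    using i assms by auto
  show "p ^ (n - 1 - fdist n i k) * q ^ fdist n i k = wbox n (\<lambda>_. p) (\<lambda>_. q) i k"
    by (rule wbox_const[OF i assms, symmetric])
next
  fix d assume d: "d \<in> {..<n}"
  have i: "(if d < k then k - d else k + n - d) \<in> {1..n}" using d assms by auto
  then show "(if d < k then k - d else k + n - d) \<in> {1..n}" .
  show "fdist n (if d < k then k - d else k + n - d) k = d"
    using fdist_labels[OF i assms] d assms by auto
qed

theorem proposition4p9:
  fixes p q :: "'a::comm_ring_1" and L n :: nat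
  assumes "1 \<le> n" and "n \<le> L"
  shows "Zpart L n (\<lambda>_. p) (\<lambda>_. q) = of_nat ((L - 1) choose (n - 1)) * qint n p q ^ (L - n)"
proof -
  let ?g = "wbox n (\<lambda>_. p) (\<lambda>_. q)"
  have "0 < L" using assms by simp
  have wt: "wt n (\<lambda>_. p) (\<lambda>_. q) (Bul 1 # u) = box_weight ?g 1 u" if "u \<in> ordered_tails n 1 (L - 1)" for u
  proof -
    interpret ordered_word n "Bul 1 # u" using that by unfold_locales (simp add: ordered_tails_def)
    show ?thesis using wt_eq_box_weight[of "\<lambda>_. p" "\<lambda>_. q"] by simp
  qed
  have "Zpart L n (\<lambda>_. p) (\<lambda>_. q) =
    (\<Sum>u\<in>ordered_tails n 1 (L - 1). wt n (\<lambda>_. p) (\<lambda>_. q) (Bul 1 # u))"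
    unfolding Zpart_def Omega_first_Bul_eq[OF assms(1) \<open>0 < L\<close>] by (simp add: sum.reindex)
  also have "\<dots> = (\<Sum>u\<in>ordered_tails n 1 (L - 1). box_weight ?g 1 u)"
    using wt by (rule sum.cong[OF refl])
  also have "\<dots> = of_nat ((L - 1) choose (n - 1)) * qint n p q ^ (L - 1 - (n - 1))"
    using sum_box_weight_ordered_tails[OF sum_wbox_const, where k = 1 and m = "L - 1"] assms by simp
  also have "L - 1 - (n - 1) = L - n" using assms by simp
  finally show ?thesis .
qed

end
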